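(* Let $R$ be a commutative Noetherian ring of prime characteristic $p$, $G$ an $x$-torsion-free left $R[x,f]$-module, $\mathfrak{a}$ an ideal of $R$, $L:=\operatorname{ann}_G(\mathfrak{a}R[x,f])$ (so $G/L$ is $x$-torsion-free), and $N$ an $R$-submodule of $G$ with $L\subseteq N\subseteq G$. (i) If $N=\operatorname{ann}_G(\mathfrak{b}R[x,f])$ for an ideal $\mathfrak{b}\subseteq\mathfrak{a}$, then $N/L=\operatorname{ann}_{G/L}((\mathfrak{b}:\mathfrak{a})R[x,f])$; moreover, if $\operatorname{grann}_{R[x,f]}N=\mathfrak{b}R[x,f]$, then $\operatorname{grann}_{R[x,f]}(N/L)=(\mathfrak{b}:\mathfrak{a})R[x,f]$. (ii) If $N/L=\operatorname{ann}_{G/L}(\mathfrak{c}R[x,f])$ for an ideal $\mathfrak{c}$, then $N=\operatorname{ann}_G(\mathfrak{a}\mathfrak{c}R[x,f])=\operatorname{ann}_G((\mathfrak{a}\cap\mathfrak{c})R[x,f])$; moreover, if $\operatorname{grann}_{R[x,f]}L=\mathfrak{a}R[x,f]$ and $\operatorname{grann}_{R[x,f]}(N/L)=\mathfrak{c}R[x,f]$, then $\operatorname{grann}_{R[x,f]}N=(\mathfrak{a}\cap\mathfrak{c})R[x,f]$. (iii) $N\mapsto N/L$ is an order-preserving bijection from the set of special annihilator submodules of $G$ containing $L$ to the set of special annihilator submodules of $G/L$.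
   Context: $R[x,f]$ is the Frobenius skew polynomial ring: free left $R$-module on $(x^i)_{i\ge0}$, $xr=r^px$; for an ideal $\mathfrak{d}$, $\mathfrak{d}R[x,f]=\bigoplus_n\mathfrak{d}x^n$. $x$-torsion-free: $xg=0\Rightarrow g=0$. $\operatorname{ann}_M\mathfrak{B}$ is the set of elements of $M$ killed by $\mathfrak{B}$; special annihilator submodules of $M$ are those of form $\operatorname{ann}_M\mathfrak{B}$ for a graded two-sided ideal $\mathfrak{B}=\bigoplus_n\mathfrak{b}_nx^n$ ($(\mathfrak{b}_n)$ ascending). $\operatorname{grann}N$ is the set of $\sum r_ix^i$ with each $r_ix^i$ annihilating $N$. *)

theory Defs
  imports Main "HOL-Computational_Algebra.Polynomial"
begin

definition is_ideal :: "'r::comm_ring_1 set \<Rightarrow> bool" where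
  "is_ideal I \<longleftrightarrow> 0 \<in> I \<and> (\<forall>a\<in>I. \<forall>b\<in>I. a + b \<in> I) \<and> (\<forall>r. \<forall>a\<in>I. r * a \<in> I)"

definition ideal_colon :: "'r::comm_ring_1 set \<Rightarrow> 'r set \<Rightarrow> 'r set" where
  "ideal_colon B A = {r. \<forall>a\<in>A. r * a \<in> B}"

definition ideal_prod :: "'r::comm_ring_1 set \<Rightarrow> 'r set \<Rightarrow> 'r set" where
  "ideal_prod A C = \<Inter>{I. is_ideal I \<and> (\<forall>a\<in>A. \<forall>c\<in>C. a * c \<in> I)}"

definition noetherian_ring :: "'r::comm_ring_1 itself \<Rightarrow> bool" where
  "noetherian_ring _ \<longleftrightarrow>
     (\<forall>I :: nat \<Rightarrow> 'r set. (\<forall>n. is_ideal (I n) \<and> I n \<subseteq> I (Suc n)) \<longrightarrow>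
        (\<exists>m. \<forall>n\<ge>m. I n = I m))"

text \<open>An element of R[x,f] is \<open>\<Sum> r_i x^i\<close>; as a left R-module R[x,f] is free on the
  powers of x, so we represent its elements by their coefficient sequences, i.e. by
  \<open>'r poly\<close> (only the underlying left R-module, not the multiplication, is taken from
  the polynomial type).  A left R[x,f]-module is given by an R-module together with the
  action \<open>frob\<close> of x, which is additive and satisfies \<open>x (r g) = r^p (x g)\<close>.\<close>

record ('r, 'm) skew_mod =
  carrier :: "'m set"
  zero :: 'm
  add :: "'m \<Rightarrow> 'm \<Rightarrow> 'm"
  smult :: "'r \<Rightarrow> 'm \<Rightarrow> 'm"
  frob :: "'m \<Rightarrow> 'm"

definition skew_module :: "nat \<Rightarrow> ('r::comm_ring_1, 'm) skew_mod \<Rightarrow> bool" where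
  "skew_module p M \<longleftrightarrow>
     zero M \<in> carrier M \<and>
     (\<forall>g\<in>carrier M. \<forall>h\<in>carrier M. add M g h \<in> carrier M) \<and>
     (\<forall>g\<in>carrier M. \<forall>h\<in>carrier M. \<forall>k\<in>carrier M. add M (add M g h) k = add M g (add M h k)) \<and>
     (\<forall>g\<in>carrier M. \<forall>h\<in>carrier M. add M g h = add M h g) \<and>
     (\<forall>g\<in>carrier M. add M (zero M) g = g) \<and>
     (\<forall>g\<in>carrier M. \<exists>h\<in>carrier M. add M g h = zero M) \<and>
     (\<forall>r. \<forall>g\<in>carrier M. smult M r g \<in> carrier M) \<and>
     (\<forall>r s. \<forall>g\<in>carrier M. smult M (r + s) g = add M (smult M r g) (smult M s g)) \<and>
     (\<forall>r. \<forall>g\<in>carrier M. \<forall>h\<in>carrier M. smult M r (add M g h) = add M (smult M r g) (smult M r h)) \<and>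
     (\<forall>r s. \<forall>g\<in>carrier M. smult M (r * s) g = smult M r (smult M s g)) \<and>
     (\<forall>g\<in>carrier M. smult M 1 g = g) \<and>
     (\<forall>g\<in>carrier M. frob M g \<in> carrier M) \<and>
     (\<forall>g\<in>carrier M. \<forall>h\<in>carrier M. frob M (add M g h) = add M (frob M g) (frob M h)) \<and>
     (\<forall>r. \<forall>g\<in>carrier M. frob M (smult M r g) = smult M (r ^ p) (frob M g))"

definition act :: "('r::comm_ring_1, 'm) skew_mod \<Rightarrow> 'r poly \<Rightarrow> 'm \<Rightarrow> 'm" where
  "act M \<theta> g = foldr (add M)
      (map (\<lambda>i. smult M (coeff \<theta> i) ((frob M ^^ i) g)) [0..<Suc (degree \<theta>)]) (zero M)"

definition x_torsion_free :: "('r::comm_ring_1, 'm) skew_mod \<Rightarrow> bool" where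
  "x_torsion_free M \<longleftrightarrow> (\<forall>g\<in>carrier M. frob M g = zero M \<longrightarrow> g = zero M)"

definition r_submodule :: "('r::comm_ring_1, 'm) skew_mod \<Rightarrow> 'm set \<Rightarrow> bool" where
  "r_submodule M N \<longleftrightarrow> N \<subseteq> carrier M \<and> zero M \<in> N \<and>
     (\<forall>g\<in>N. \<forall>h\<in>N. add M g h \<in> N) \<and> (\<forall>r. \<forall>g\<in>N. smult M r g \<in> N)"

text \<open>The extension \<open>\<dd>R[x,f] = \<Oplus>_n \<dd> x^n\<close> of an ideal of R.\<close>
definition ext_ideal :: "'r::comm_ring_1 set \<Rightarrow> 'r poly set" where
  "ext_ideal D = {\<theta>. \<forall>n. coeff \<theta> n \<in> D}"

definition ann :: "('r::comm_ring_1, 'm) skew_mod \<Rightarrow> 'r poly set \<Rightarrow> 'm set" where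
  "ann M B = {g\<in>carrier M. \<forall>\<theta>\<in>B. act M \<theta> g = zero M}"

definition grann :: "('r::comm_ring_1, 'm) skew_mod \<Rightarrow> 'm set \<Rightarrow> 'r poly set" where
  "grann M N = {\<theta>. \<forall>i. \<forall>g\<in>N. act M (monom (coeff \<theta> i) i) g = zero M}"

text \<open>Graded two-sided ideals \<open>\<Oplus>_n \<bb>_n x^n\<close> of R[x,f], with \<open>(\<bb>_n)\<close> an ascending
  sequence of ideals of R (exactly the graded two-sided ideals).\<close>
definition graded_two_sided_ideal :: "'r::comm_ring_1 poly set \<Rightarrow> bool" where
  "graded_two_sided_ideal B \<longleftrightarrow>
     (\<exists>b :: nat \<Rightarrow> 'r set. (\<forall>n. is_ideal (b n)) \<and> (\<forall>n. b n \<subseteq> b (Suc n)) \<and>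
        B = {\<theta>. \<forall>n. coeff \<theta> n \<in> b n})"

definition special_ann_submodule :: "('r::comm_ring_1, 'm) skew_mod \<Rightarrow> 'm set \<Rightarrow> bool" where
  "special_ann_submodule M S \<longleftrightarrow> (\<exists>B. graded_two_sided_ideal B \<and> S = ann M B)"

definition coset :: "('r, 'm) skew_mod \<Rightarrow> 'm \<Rightarrow> 'm set \<Rightarrow> 'm set" where
  "coset M g L = {add M g l | l. l \<in> L}"

definition quot_mod :: "('r::comm_ring_1, 'm) skew_mod \<Rightarrow> 'm set \<Rightarrow> ('r, 'm set) skew_mod" where
  "quot_mod M L =
     \<lparr> carrier = (\<lambda>g. coset M g L) ` carrier M,
       zero = L,
       add = (\<lambda>A B. {add M a b | a b. a \<in> A \<and> b \<in> B}),
       smult = (\<lambda>r A. {add M (smult M r a) l | a l. a \<in> A \<and> l \<in> L}),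
       frob = (\<lambda>A. {add M (frob M a) l | a l. a \<in> A \<and> l \<in> L}) \<rparr>"

definition quot_sub :: "('r::comm_ring_1, 'm) skew_mod \<Rightarrow> 'm set \<Rightarrow> 'm set \<Rightarrow> 'm set set" where
  "quot_sub M L N = (\<lambda>g. coset M g L) ` N"

end

theory Submission
  imports Defs "HOL-Computational_Algebra.Primes"
begin

text \<open>
  For a sequence of ideals \<open>d\<close> let \<open>ann(d)\<close> be the set of \<open>g\<close> with \<open>d_n x^n g = 0\<close> for all
  \<open>n\<close>, the annihilator of \<open>\<Oplus>_n d_n x^n\<close>. Since \<open>L = ann(\<aa>)\<close>, the preimage in \<open>G\<close> of the
  annihilator of \<open>\<Oplus>_n d_n x^n\<close> in \<open>G/L\<close> consists of the \<open>g\<close> with \<open>s r^(p^m) x^(m+n) g = 0\<close>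
  for all \<open>s \<in> \<aa>\<close>, \<open>r \<in> d_n\<close> and \<open>m\<close>. Conversely, \<open>x\<close>-torsion-freeness cancels powers:
  \<open>t^q x^(e+n) g = 0\<close> with \<open>q \<le> p^e\<close> forces \<open>t x^n g = 0\<close>, because \<open>x^e\<close> maps \<open>t x^n g\<close> to a
  multiple of \<open>t^q x^(e+n) g\<close>. Applied to \<open>t x^m (t x^(n+1) g) = t^(p^m+1) x^(m+n+1) g\<close>, this
  shows that for an ascending chain \<open>d\<close> the preimage is \<open>ann(\<aa> \<inter> d)\<close>, and that every
  \<open>ann(d) \<supseteq> L\<close> is the preimage of the annihilator of \<open>\<Oplus>_n (d_n : \<aa>) x^n\<close> in \<open>G/L\<close>.
  Together with the injectivity of \<open>S \<mapsto> S/L\<close> on submodules containing \<open>L\<close>, all three parts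
  follow.
\<close>

section \<open>Ideals of \<open>R\<close> and graded ideals of \<open>R[x,f]\<close>\<close>

definition graded_ideal :: "(nat \<Rightarrow> 'r::comm_ring_1 set) \<Rightarrow> 'r poly set" where
  "graded_ideal d = {\<theta>. \<forall>n. coeff \<theta> n \<in> d n}"

definition ideal_chain :: "(nat \<Rightarrow> 'r::comm_ring_1 set) \<Rightarrow> bool" where
  "ideal_chain d \<longleftrightarrow> (\<forall>n. is_ideal (d n)) \<and> (\<forall>n. d n \<subseteq> d (Suc n))"

lemma ext_ideal_eq_graded_ideal: "ext_ideal D = graded_ideal (\<lambda>_. D)"
  by (simp add: ext_ideal_def graded_ideal_def)

lemma graded_two_sided_ideal_iff:
  "graded_two_sided_ideal B \<longleftrightarrow> (\<exists>d. ideal_chain d \<and> B = graded_ideal d)"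
  unfolding graded_two_sided_ideal_def ideal_chain_def graded_ideal_def by blast

lemma special_ann_submodule_iff:
  "special_ann_submodule M S \<longleftrightarrow> (\<exists>d. ideal_chain d \<and> S = ann M (graded_ideal d))"
  unfolding special_ann_submodule_def graded_two_sided_ideal_iff by blast

lemma is_ideal_zero: "is_ideal I \<Longrightarrow> 0 \<in> I"
  unfolding is_ideal_def by blast

lemma is_ideal_mult_left: "is_ideal I \<Longrightarrow> x \<in> I \<Longrightarrow> r * x \<in> I"
  unfolding is_ideal_def by blast

lemma is_ideal_mult_right: "is_ideal I \<Longrightarrow> x \<in> I \<Longrightarrow> x * r \<in> I"
  unfolding is_ideal_def by (metis mult.commute)

lemma is_ideal_power: "is_ideal I \<Longrightarrow> x \<in> I \<Longrightarrow> k \<noteq> 0 \<Longrightarrow> x ^ k \<in> I"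
  by (cases k) (simp_all add: is_ideal_mult_right)

lemma is_ideal_Int: "is_ideal I \<Longrightarrow> is_ideal J \<Longrightarrow> is_ideal (I \<inter> J)"
  unfolding is_ideal_def by blast

lemma is_ideal_colon: "is_ideal B \<Longrightarrow> is_ideal (ideal_colon B A)"
  unfolding is_ideal_def ideal_colon_def by (simp add: distrib_right mult.assoc)

lemma ideal_colon_mono: "B \<subseteq> B' \<Longrightarrow> ideal_colon B A \<subseteq> ideal_colon B' A"
  unfolding ideal_colon_def by blast

lemma subset_ideal_colon: "is_ideal B \<Longrightarrow> B \<subseteq> ideal_colon B A"
  unfolding ideal_colon_def by (auto intro: is_ideal_mult_right)

lemma mult_mem_ideal_prod: "x \<in> A \<Longrightarrow> y \<in> C \<Longrightarrow> x * y \<in> ideal_prod A C"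
  unfolding ideal_prod_def by blast

lemma zero_mem_ideal_prod: "0 \<in> ideal_prod A C"
  unfolding ideal_prod_def using is_ideal_zero by blast

lemma ideal_prod_subset_Int:
  assumes "is_ideal A" "is_ideal C"
  shows "ideal_prod A C \<subseteq> A \<inter> C"
  using assms is_ideal_Int[OF assms] is_ideal_mult_left is_ideal_mult_right
  unfolding ideal_prod_def by blast

lemma ideal_chain_zero: "ideal_chain d \<Longrightarrow> 0 \<in> d n"
  unfolding ideal_chain_def by (simp add: is_ideal_zero)

lemma ideal_chain_mono: "ideal_chain d \<Longrightarrow> n \<le> m \<Longrightarrow> d n \<subseteq> d m"
  unfolding ideal_chain_def by (simp add: lift_Suc_mono_le)

lemma ideal_chain_const: "is_ideal I \<Longrightarrow> ideal_chain (\<lambda>_. I)"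
  unfolding ideal_chain_def by simp

lemma ideal_chain_colon: "ideal_chain d \<Longrightarrow> ideal_chain (\<lambda>n. ideal_colon (d n) A)"
  unfolding ideal_chain_def by (simp add: is_ideal_colon ideal_colon_mono)

lemma ideal_chain_Int: "is_ideal A \<Longrightarrow> ideal_chain d \<Longrightarrow> ideal_chain (\<lambda>n. A \<inter> d n)"
  unfolding ideal_chain_def by (auto simp: is_ideal_Int)

section \<open>Modules over \<open>R[x,f]\<close>\<close>

definition graded_ann :: "('r::comm_ring_1, 'm) skew_mod \<Rightarrow> (nat \<Rightarrow> 'r set) \<Rightarrow> 'm set" where
  "graded_ann M d = {g \<in> carrier M. \<forall>n. \<forall>s\<in>d n. smult M s ((frob M ^^ n) g) = zero M}"

lemma grann_eq_ext_ideal_iff: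
  assumes act_zero: "\<And>g. g \<in> X \<Longrightarrow> act M 0 g = zero M"
  shows "grann M X = ext_ideal D \<longleftrightarrow>
    (\<forall>r i. (\<forall>g\<in>X. act M (monom r i) g = zero M) \<longleftrightarrow> r \<in> D)"
proof
  have monom_grann: "monom r i \<in> grann M X \<longleftrightarrow> (\<forall>g\<in>X. act M (monom r i) g = zero M)" for r i
    unfolding grann_def by (auto simp: act_zero)
  assume eq: "grann M X = ext_ideal D"
  have "0 \<in> grann M X"
    unfolding grann_def by (simp add: act_zero)
  then have "0 \<in> D"
    unfolding eq ext_ideal_def by auto
  then have "monom r i \<in> ext_ideal D \<longleftrightarrow> r \<in> D" for r i
    unfolding ext_ideal_def by auto
  then show "\<forall>r i. (\<forall>g\<in>X. act M (monom r i) g = zero M) \<longleftrightarrow> r \<in> D"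
    using monom_grann eq by blast
next
  assume "\<forall>r i. (\<forall>g\<in>X. act M (monom r i) g = zero M) \<longleftrightarrow> r \<in> D"
  then show "grann M X = ext_ideal D"
    unfolding grann_def ext_ideal_def by auto
qed

lemma foldr_add_closed:
  "set xs \<subseteq> P \<Longrightarrow> z \<in> P \<Longrightarrow> (\<And>g h. g \<in> P \<Longrightarrow> h \<in> P \<Longrightarrow> add M g h \<in> P) \<Longrightarrow>
   foldr (add M) xs z \<in> P"
  by (induction xs) auto

locale frobenius_module =
  fixes p :: nat and M :: "('r::comm_ring_1, 'm) skew_mod"
  assumes skew_module: "skew_module p M"
begin

lemma zero_closed: "zero M \<in> carrier M"
  using skew_module unfolding skew_module_def by (elim conjE) metis

lemma add_closed: "g \<in> carrier M \<Longrightarrow> h \<in> carrier M \<Longrightarrow> add M g h \<in> carrier M"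
  using skew_module unfolding skew_module_def by (elim conjE) metis

lemma add_assoc:
  "g \<in> carrier M \<Longrightarrow> h \<in> carrier M \<Longrightarrow> k \<in> carrier M \<Longrightarrow>
   add M (add M g h) k = add M g (add M h k)"
  using skew_module unfolding skew_module_def by (elim conjE) metis

lemma add_commute: "g \<in> carrier M \<Longrightarrow> h \<in> carrier M \<Longrightarrow> add M g h = add M h g"
  using skew_module unfolding skew_module_def by (elim conjE) metis

lemma add_zero_left: "g \<in> carrier M \<Longrightarrow> add M (zero M) g = g"
  using skew_module unfolding skew_module_def by (elim conjE) metis

lemma add_inverse_exists: "g \<in> carrier M \<Longrightarrow> \<exists>h\<in>carrier M. add M g h = zero M"
  using skew_module unfolding skew_module_def by (elim conjE) metis

lemma smult_closed: "g \<in> carrier M \<Longrightarrow> smult M r g \<in> carrier M"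
  using skew_module unfolding skew_module_def by (elim conjE) metis

lemma smult_add_left:
  "g \<in> carrier M \<Longrightarrow> smult M (r + s) g = add M (smult M r g) (smult M s g)"
  using skew_module unfolding skew_module_def by (elim conjE) metis

lemma smult_add_right:
  "g \<in> carrier M \<Longrightarrow> h \<in> carrier M \<Longrightarrow> smult M r (add M g h) = add M (smult M r g) (smult M r h)"
  using skew_module unfolding skew_module_def by (elim conjE) metis

lemma smult_smult: "g \<in> carrier M \<Longrightarrow> smult M r (smult M s g) = smult M (r * s) g"
  using skew_module unfolding skew_module_def by (elim conjE) metis

lemma smult_one: "g \<in> carrier M \<Longrightarrow> smult M 1 g = g"
  using skew_module unfolding skew_module_def by (elim conjE) metis

lemma frob_closed: "g \<in> carrier M \<Longrightarrow> frob M g \<in> carrier M"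
  using skew_module unfolding skew_module_def by (elim conjE) metis

lemma frob_add: "g \<in> carrier M \<Longrightarrow> h \<in> carrier M \<Longrightarrow> frob M (add M g h) = add M (frob M g) (frob M h)"
  using skew_module unfolding skew_module_def by (elim conjE) metis

lemma frob_smult: "g \<in> carrier M \<Longrightarrow> frob M (smult M r g) = smult M (r ^ p) (frob M g)"
  using skew_module unfolding skew_module_def by (elim conjE) metis

lemma add_zero_right: "g \<in> carrier M \<Longrightarrow> add M g (zero M) = g"
  using add_zero_left add_commute zero_closed by metis

lemma add_add_swap:
  assumes "g \<in> carrier M" "h \<in> carrier M" "k \<in> carrier M" "l \<in> carrier M"
  shows "add M (add M g k) (add M h l) = add M (add M g h) (add M k l)"
  using assms by (metis add_assoc add_closed add_commute)

lemma add_idem_eq_zero: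
  assumes "g \<in> carrier M" "add M g g = g"
  shows "g = zero M"
proof -
  obtain h where h: "h \<in> carrier M" "add M g h = zero M"
    using add_inverse_exists assms(1) by blast
  have "add M g (zero M) = zero M"
    using add_assoc[OF assms(1) assms(1) h(1)] assms(2) h(2) by simp
  then show ?thesis
    using add_zero_right assms(1) by simp
qed

lemma smult_zero_right: "smult M r (zero M) = zero M"
  using add_idem_eq_zero smult_closed smult_add_right zero_closed add_zero_left by metis

lemma smult_zero_left: "g \<in> carrier M \<Longrightarrow> smult M 0 g = zero M"
  using add_idem_eq_zero[OF smult_closed] smult_add_left[of g 0 0] by simp

lemma frob_zero: "frob M (zero M) = zero M"
  using add_idem_eq_zero frob_closed frob_add zero_closed add_zero_left by metis

lemma add_smult_minus_one: "g \<in> carrier M \<Longrightarrow> add M g (smult M (-1) g) = zero M"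
  using smult_add_left[of g 1 "-1"] smult_one smult_zero_left by simp

lemma frob_pow_closed: "g \<in> carrier M \<Longrightarrow> (frob M ^^ n) g \<in> carrier M"
  by (induction n) (auto intro: frob_closed)

lemma frob_pow_add:
  "g \<in> carrier M \<Longrightarrow> h \<in> carrier M \<Longrightarrow>
   (frob M ^^ n) (add M g h) = add M ((frob M ^^ n) g) ((frob M ^^ n) h)"
  by (induction n) (auto simp: frob_add frob_pow_closed)

lemma frob_pow_smult:
  "g \<in> carrier M \<Longrightarrow> (frob M ^^ n) (smult M r g) = smult M (r ^ p ^ n) ((frob M ^^ n) g)"
  by (induction n) (simp_all add: frob_smult frob_pow_closed power_mult[symmetric] mult.commute)

lemma frob_pow_zero: "(frob M ^^ n) (zero M) = zero M"
  by (induction n) (auto simp: frob_zero)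

lemma smult_frob_pow_smult:
  "g \<in> carrier M \<Longrightarrow> smult M s ((frob M ^^ m) (smult M r ((frob M ^^ n) g))) =
     smult M (s * r ^ p ^ m) ((frob M ^^ (m + n)) g)"
  by (simp add: frob_pow_smult frob_pow_closed smult_smult funpow_add)

lemma foldr_add_zeros:
  "\<forall>x\<in>set xs. x = zero M \<Longrightarrow> g \<in> carrier M \<Longrightarrow> foldr (add M) xs g = g"
  by (induction xs) (auto simp: add_zero_left)

lemma act_monom:
  assumes g: "g \<in> carrier M"
  shows "act M (monom r i) g = smult M r ((frob M ^^ i) g)"
proof (cases "r = 0")
  case True
  then show ?thesis
    using g by (simp add: act_def smult_zero_left add_zero_right frob_pow_closed zero_closed)
next
  case False
  then show ?thesis
    using g by (simp add: act_def degree_monom_eq add_zero_right smult_closed frob_pow_closed,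
        subst foldr_add_zeros) (auto simp: smult_zero_left frob_pow_closed smult_closed)
qed

lemma act_closed: "g \<in> carrier M \<Longrightarrow> act M \<theta> g \<in> carrier M"
  unfolding act_def
  by (auto intro!: foldr_add_closed simp: zero_closed add_closed smult_closed frob_pow_closed)

text \<open>With \<open>P = {zero M}\<close> this describes annihilators in \<open>M\<close>, with \<open>P = L\<close> annihilators in \<open>M/L\<close>.\<close>

lemma act_graded_ideal_mem_iff:
  assumes "zero M \<in> P" "\<And>g h. g \<in> P \<Longrightarrow> h \<in> P \<Longrightarrow> add M g h \<in> P" "\<And>n. 0 \<in> d n"
    and g: "g \<in> carrier M"
  shows "(\<forall>\<theta>\<in>graded_ideal d. act M \<theta> g \<in> P) \<longleftrightarrow>
         (\<forall>n. \<forall>s\<in>d n. smult M s ((frob M ^^ n) g) \<in> P)"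
proof
  assume "\<forall>\<theta>\<in>graded_ideal d. act M \<theta> g \<in> P"
  moreover have "monom s n \<in> graded_ideal d" if "s \<in> d n" for s n
    using that assms(3) by (simp add: graded_ideal_def)
  ultimately show "\<forall>n. \<forall>s\<in>d n. smult M s ((frob M ^^ n) g) \<in> P"
    using act_monom[OF g] by metis
next
  assume "\<forall>n. \<forall>s\<in>d n. smult M s ((frob M ^^ n) g) \<in> P"
  then show "\<forall>\<theta>\<in>graded_ideal d. act M \<theta> g \<in> P"
    unfolding act_def graded_ideal_def using assms(1,2)
    by (auto intro!: foldr_add_closed)
qed

lemma ann_graded_ideal: "(\<And>n. 0 \<in> d n) \<Longrightarrow> ann M (graded_ideal d) = graded_ann M d"
  using act_graded_ideal_mem_iff[of "{zero M}" d]
  unfolding ann_def graded_ann_def by (auto simp: add_zero_left zero_closed)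

lemma ann_ext_ideal: "0 \<in> D \<Longrightarrow> ann M (ext_ideal D) = graded_ann M (\<lambda>_. D)"
  by (simp add: ext_ideal_eq_graded_ideal ann_graded_ideal)

lemma special_ann_submodule_iff_graded_ann:
  "special_ann_submodule M S \<longleftrightarrow> (\<exists>d. ideal_chain d \<and> S = graded_ann M d)"
  unfolding special_ann_submodule_iff using ann_graded_ideal ideal_chain_zero by metis

lemma grann_eq_ext_ideal_iff_smult:
  assumes "X \<subseteq> carrier M"
  shows "grann M X = ext_ideal D \<longleftrightarrow>
    (\<forall>r i. (\<forall>g\<in>X. smult M r ((frob M ^^ i) g) = zero M) \<longleftrightarrow> r \<in> D)"
proof -
  have "act M (monom r i) g = smult M r ((frob M ^^ i) g)" if "g \<in> X" for r i g
    using act_monom assms that by blast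
  moreover have "act M 0 g = zero M" if "g \<in> X" for g
    using act_monom[of g 0 0] smult_zero_left assms that by auto
  ultimately show ?thesis
    by (simp add: grann_eq_ext_ideal_iff)
qed

lemma graded_ann_subset_carrier: "graded_ann M d \<subseteq> carrier M"
  unfolding graded_ann_def by blast

lemma graded_ann_antimono: "(\<And>n. d n \<subseteq> e n) \<Longrightarrow> graded_ann M e \<subseteq> graded_ann M d"
  unfolding graded_ann_def by blast

lemma r_submodule_graded_ann:
  assumes "\<And>n. is_ideal (d n)"
  shows "r_submodule M (graded_ann M d)"
  unfolding r_submodule_def graded_ann_def
  by (auto simp: zero_closed add_closed smult_closed frob_pow_zero smult_zero_right frob_pow_add
      smult_add_right frob_pow_closed add_zero_left frob_pow_smult smult_smult)
    (metis assms is_ideal_mult_right)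

lemma r_submodule_special_ann_submodule: "special_ann_submodule M S \<Longrightarrow> r_submodule M S"
  by (auto simp: special_ann_submodule_iff_graded_ann ideal_chain_def intro: r_submodule_graded_ann)

lemma frob_graded_ann:
  assumes "\<And>n. d n \<subseteq> d (Suc n)" "g \<in> graded_ann M d"
  shows "frob M g \<in> graded_ann M d"
proof -
  have "smult M s ((frob M ^^ n) (frob M g)) = zero M" if "s \<in> d n" for s n
  proof -
    have "s \<in> d (Suc n)"
      using assms(1) that by blast
    then have "smult M s ((frob M ^^ Suc n) g) = zero M"
      using assms(2) unfolding graded_ann_def by blast
    then show ?thesis
      by (simp add: funpow_swap1)
  qed
  then show ?thesis
    using assms(2) unfolding graded_ann_def by (auto simp: frob_closed)
qed

end

section \<open>\<open>x\<close>-torsion-free modules\<close>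

locale torsion_free_frobenius_module = frobenius_module +
  assumes x_torsion_free: "x_torsion_free M" and two_le_p: "2 \<le> p"
begin

lemma eq_zero_of_frob_pow_eq_zero:
  "g \<in> carrier M \<Longrightarrow> (frob M ^^ e) g = zero M \<Longrightarrow> g = zero M"
proof (induction e arbitrary: g)
  case (Suc e)
  then have "frob M g = zero M"
    by (simp add: funpow_swap1 frob_closed)
  then show ?case
    using x_torsion_free Suc.prems(1) unfolding x_torsion_free_def by blast
qed simp

lemma smult_eq_zero_of_power:
  assumes g: "g \<in> carrier M" and killed: "smult M (t ^ q) ((frob M ^^ (e + n)) g) = zero M"
    and "q \<le> p ^ e"
  shows "smult M t ((frob M ^^ n) g) = zero M"
proof -
  have "(frob M ^^ e) (smult M t ((frob M ^^ n) g)) = smult M (t ^ p ^ e) ((frob M ^^ (e + n)) g)"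
    using g by (simp add: frob_pow_smult frob_pow_closed funpow_add)
  also have "t ^ p ^ e = t ^ (p ^ e - q) * t ^ q"
    using \<open>q \<le> p ^ e\<close> by (simp flip: power_add)
  also have "smult M (t ^ (p ^ e - q) * t ^ q) ((frob M ^^ (e + n)) g) = zero M"
    using g killed by (simp flip: smult_smult add: frob_pow_closed smult_zero_right)
  finally show ?thesis
    using eq_zero_of_frob_pow_eq_zero g by (simp add: smult_closed frob_pow_closed)
qed

lemma smult_eq_zero_of_frob_shift:
  assumes g: "g \<in> carrier M"
    and "smult M t ((frob M ^^ m) (smult M t ((frob M ^^ Suc n) g))) = zero M"
  shows "smult M t ((frob M ^^ n) g) = zero M"
proof (rule smult_eq_zero_of_power[OF g])
  have "smult M (t * t ^ p ^ m) ((frob M ^^ (m + Suc n)) g) = zero M"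
    using assms(2) by (simp only: smult_frob_pow_smult[OF g])
  then show "smult M (t ^ (p ^ m + 1)) ((frob M ^^ (Suc m + n)) g) = zero M"
    by simp
  have "p ^ m + 1 \<le> 2 * p ^ m"
    using two_le_p by simp
  also have "\<dots> \<le> p ^ Suc m"
    using two_le_p by simp
  finally show "p ^ m + 1 \<le> p ^ Suc m" .
qed

lemma graded_ann_const_subset:
  assumes "\<And>t. t \<in> J \<Longrightarrow> t * t \<in> I"
  shows "graded_ann M (\<lambda>_. I) \<subseteq> graded_ann M (\<lambda>_. J)"
proof
  fix g assume g: "g \<in> graded_ann M (\<lambda>_. I)"
  have "smult M t ((frob M ^^ n) g) = zero M" if "t \<in> J" for t n
  proof (rule smult_eq_zero_of_frob_shift[where m = 0])
    show g_carrier: "g \<in> carrier M"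
      using g graded_ann_subset_carrier by blast
    have "smult M (t * t) ((frob M ^^ Suc n) g) = zero M"
      using g assms[OF that] unfolding graded_ann_def by blast
    then show "smult M t ((frob M ^^ 0) (smult M t ((frob M ^^ Suc n) g))) = zero M"
      using g_carrier by (simp add: smult_smult frob_pow_closed frob_closed)
  qed
  then show "g \<in> graded_ann M (\<lambda>_. J)"
    using g unfolding graded_ann_def by blast
qed

lemma ann_ext_ideal_prod:
  assumes "is_ideal A" "is_ideal C"
  shows "ann M (ext_ideal (ideal_prod A C)) = ann M (ext_ideal (A \<inter> C))"
proof -
  have "graded_ann M (\<lambda>_. ideal_prod A C) = graded_ann M (\<lambda>_. A \<inter> C)"
    using graded_ann_const_subset[of "A \<inter> C" "ideal_prod A C"]
      graded_ann_antimono[of "\<lambda>_. ideal_prod A C" "\<lambda>_. A \<inter> C"]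
      ideal_prod_subset_Int[OF assms] mult_mem_ideal_prod by blast
  then show ?thesis
    using assms by (simp add: ann_ext_ideal zero_mem_ideal_prod is_ideal_zero)
qed

end

section \<open>Quotient modules\<close>

definition graded_ann_mod ::
    "('r::comm_ring_1, 'm) skew_mod \<Rightarrow> 'm set \<Rightarrow> (nat \<Rightarrow> 'r set) \<Rightarrow> 'm set" where
  "graded_ann_mod M L d = {g \<in> carrier M. \<forall>n. \<forall>s\<in>d n. smult M s ((frob M ^^ n) g) \<in> L}"

lemma quot_sub_mono: "X \<subseteq> Y \<Longrightarrow> quot_sub M L X \<subseteq> quot_sub M L Y"
  unfolding quot_sub_def by blast

locale frobenius_quotient = frobenius_module p M
  for p and M :: "('r::comm_ring_1, 'm) skew_mod" +
  fixes L :: "'m set"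
  assumes r_submodule_L: "r_submodule M L"
    and frob_mem_L: "\<And>g. g \<in> L \<Longrightarrow> frob M g \<in> L"
begin

lemma L_subset_carrier: "L \<subseteq> carrier M"
  using r_submodule_L unfolding r_submodule_def by blast

lemma zero_mem_L: "zero M \<in> L"
  using r_submodule_L unfolding r_submodule_def by blast

lemma add_mem_L: "g \<in> L \<Longrightarrow> h \<in> L \<Longrightarrow> add M g h \<in> L"
  using r_submodule_L unfolding r_submodule_def by blast

lemma smult_mem_L: "g \<in> L \<Longrightarrow> smult M r g \<in> L"
  using r_submodule_L unfolding r_submodule_def by blast

lemma coset_self: "g \<in> carrier M \<Longrightarrow> g \<in> coset M g L"
  unfolding coset_def using add_zero_right zero_mem_L by force

lemma coset_eq_L_iff:
  assumes h: "h \<in> carrier M"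
  shows "coset M h L = L \<longleftrightarrow> h \<in> L"
proof
  assume "coset M h L = L"
  then show "h \<in> L"
    using coset_self h by blast
next
  assume hL: "h \<in> L"
  have "l \<in> coset M h L" if l: "l \<in> L" for l
  proof -
    have l_carrier: "l \<in> carrier M"
      using l L_subset_carrier by blast
    have "add M h (add M (smult M (-1) h) l) = l"
      using h l_carrier
      by (simp flip: add_assoc add: smult_closed add_smult_minus_one add_zero_left)
    moreover have "add M (smult M (-1) h) l \<in> L"
      using hL l smult_mem_L add_mem_L by blast
    ultimately show ?thesis
      unfolding coset_def by force
  qed
  then show "coset M h L = L"
    using hL add_mem_L unfolding coset_def by blast
qed

lemma quot_zero_eq_L: "zero (quot_mod M L) = L"
  by (simp add: quot_mod_def)

lemma quot_zero: "zero (quot_mod M L) = coset M (zero M) L"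
  using coset_eq_L_iff[OF zero_closed] zero_mem_L by (simp add: quot_zero_eq_L)

lemma quot_add_coset:
  assumes g: "g \<in> carrier M" and h: "h \<in> carrier M"
  shows "add (quot_mod M L) (coset M g L) (coset M h L) = coset M (add M g h) L"
proof (intro equalityI subsetI)
  fix x assume "x \<in> add (quot_mod M L) (coset M g L) (coset M h L)"
  then obtain l l' where l: "l \<in> L" "l' \<in> L" and x: "x = add M (add M g l) (add M h l')"
    by (auto simp: quot_mod_def coset_def)
  then have "x = add M (add M g h) (add M l l')"
    using add_add_swap g h L_subset_carrier by blast
  then show "x \<in> coset M (add M g h) L"
    using l add_mem_L unfolding coset_def by blast
next
  fix x assume "x \<in> coset M (add M g h) L"
  then obtain l where l: "l \<in> L" and x: "x = add M (add M g h) l"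
    unfolding coset_def by blast
  then have "x = add M (add M g l) (add M h (zero M))"
    using add_add_swap[OF g h _ zero_closed] add_zero_right L_subset_carrier by auto
  then show "x \<in> add (quot_mod M L) (coset M g L) (coset M h L)"
    using l zero_mem_L by (auto simp: quot_mod_def coset_def)
qed

lemma quot_smult_coset:
  assumes g: "g \<in> carrier M"
  shows "smult (quot_mod M L) r (coset M g L) = coset M (smult M r g) L"
proof (intro equalityI subsetI)
  fix x assume "x \<in> smult (quot_mod M L) r (coset M g L)"
  then obtain l l' where l: "l \<in> L" "l' \<in> L" and x: "x = add M (smult M r (add M g l)) l'"
    by (auto simp: quot_mod_def coset_def)
  moreover have "l \<in> carrier M" "l' \<in> carrier M"
    using l L_subset_carrier by auto
  ultimately have "x = add M (smult M r g) (add M (smult M r l) l')"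
    using g by (simp add: smult_add_right add_assoc smult_closed)
  then show "x \<in> coset M (smult M r g) L"
    using l add_mem_L smult_mem_L unfolding coset_def by blast
next
  fix x assume "x \<in> coset M (smult M r g) L"
  then show "x \<in> smult (quot_mod M L) r (coset M g L)"
    using coset_self[OF g] unfolding coset_def by (auto simp: quot_mod_def)
qed

lemma quot_frob_coset:
  assumes g: "g \<in> carrier M"
  shows "frob (quot_mod M L) (coset M g L) = coset M (frob M g) L"
proof (intro equalityI subsetI)
  fix x assume "x \<in> frob (quot_mod M L) (coset M g L)"
  then obtain l l' where l: "l \<in> L" "l' \<in> L" and x: "x = add M (frob M (add M g l)) l'"
    by (auto simp: quot_mod_def coset_def)
  moreover have "l \<in> carrier M" "l' \<in> carrier M"
    using l L_subset_carrier by auto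
  ultimately have "x = add M (frob M g) (add M (frob M l) l')"
    using g by (simp add: frob_add add_assoc frob_closed)
  then show "x \<in> coset M (frob M g) L"
    using l add_mem_L frob_mem_L unfolding coset_def by blast
next
  fix x assume "x \<in> coset M (frob M g) L"
  then show "x \<in> frob (quot_mod M L) (coset M g L)"
    using coset_self[OF g] unfolding coset_def by (auto simp: quot_mod_def)
qed

lemma quot_frob_pow_coset:
  "g \<in> carrier M \<Longrightarrow> (frob (quot_mod M L) ^^ n) (coset M g L) = coset M ((frob M ^^ n) g) L"
  by (induction n) (auto simp: quot_frob_coset frob_pow_closed)

lemma quot_foldr_add_coset:
  "set xs \<subseteq> carrier M \<Longrightarrow>
   foldr (add (quot_mod M L)) (map (\<lambda>g. coset M g L) xs) (coset M (zero M) L) =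
   coset M (foldr (add M) xs (zero M)) L"
proof (induction xs)
  case (Cons g xs)
  have "foldr (add M) xs (zero M) \<in> carrier M"
    using Cons.prems by (auto intro!: foldr_add_closed simp: zero_closed add_closed)
  then show ?case
    using Cons by (simp add: quot_add_coset)
qed simp

lemma quot_act_coset:
  assumes g: "g \<in> carrier M"
  shows "act (quot_mod M L) \<theta> (coset M g L) = coset M (act M \<theta> g) L"
proof -
  let ?terms = "map (\<lambda>i. smult M (coeff \<theta> i) ((frob M ^^ i) g)) [0..<Suc (degree \<theta>)]"
  have "map (\<lambda>i. smult (quot_mod M L) (coeff \<theta> i) ((frob (quot_mod M L) ^^ i) (coset M g L)))
          [0..<Suc (degree \<theta>)] = map (\<lambda>g. coset M g L) ?terms"
    using g by (simp add: quot_frob_pow_coset quot_smult_coset frob_pow_closed)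
  moreover have "set ?terms \<subseteq> carrier M"
    using g by (auto simp: smult_closed frob_pow_closed)
  ultimately show ?thesis
    unfolding act_def quot_zero by (simp only: quot_foldr_add_coset)
qed

lemma quot_act_coset_eq_zero_iff:
  "g \<in> carrier M \<Longrightarrow> act (quot_mod M L) \<theta> (coset M g L) = zero (quot_mod M L) \<longleftrightarrow> act M \<theta> g \<in> L"
  by (simp add: quot_act_coset quot_zero_eq_L coset_eq_L_iff act_closed)

lemma ann_quot_graded_ideal:
  assumes "\<And>n. 0 \<in> d n"
  shows "ann (quot_mod M L) (graded_ideal d) = quot_sub M L (graded_ann_mod M L d)"
proof -
  have "(\<forall>\<theta>\<in>graded_ideal d. act (quot_mod M L) \<theta> (coset M g L) = zero (quot_mod M L)) \<longleftrightarrow>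
      g \<in> graded_ann_mod M L d" if g: "g \<in> carrier M" for g
    using act_graded_ideal_mem_iff[OF zero_mem_L add_mem_L assms g]
    by (simp add: quot_act_coset_eq_zero_iff g graded_ann_mod_def)
  then show ?thesis
    unfolding ann_def quot_sub_def graded_ann_mod_def by (auto simp: quot_mod_def)
qed

lemma grann_quot_sub_eq_ext_ideal_iff:
  assumes "X \<subseteq> carrier M"
  shows "grann (quot_mod M L) (quot_sub M L X) = ext_ideal D \<longleftrightarrow>
    (\<forall>r i. (\<forall>g\<in>X. smult M r ((frob M ^^ i) g) \<in> L) \<longleftrightarrow> r \<in> D)"
proof -
  have act_monom_coset: "act (quot_mod M L) (monom r i) (coset M g L) = zero (quot_mod M L) \<longleftrightarrow>
      smult M r ((frob M ^^ i) g) \<in> L" if "g \<in> X" for r i g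
    using assms that by (simp add: quot_act_coset_eq_zero_iff act_monom subset_iff)
  have "act (quot_mod M L) 0 (coset M g L) = zero (quot_mod M L)" if "g \<in> X" for g
    using act_monom_coset[of g 0 0] that assms by (auto simp: smult_zero_left zero_mem_L)
  then have "grann (quot_mod M L) (quot_sub M L X) = ext_ideal D \<longleftrightarrow>
      (\<forall>r i. (\<forall>g\<in>X. act (quot_mod M L) (monom r i) (coset M g L) = zero (quot_mod M L)) \<longleftrightarrow>
        r \<in> D)"
    unfolding quot_sub_def by (subst grann_eq_ext_ideal_iff) auto
  then show ?thesis
    using act_monom_coset by simp
qed

lemma special_ann_submodule_quot_iff:
  "special_ann_submodule (quot_mod M L) T \<longleftrightarrow>
   (\<exists>d. ideal_chain d \<and> T = quot_sub M L (graded_ann_mod M L d))"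
  unfolding special_ann_submodule_iff using ann_quot_graded_ideal ideal_chain_zero by metis

lemma quot_sub_subset_iff:
  assumes "X \<subseteq> carrier M" "r_submodule M Y" "L \<subseteq> Y"
  shows "quot_sub M L X \<subseteq> quot_sub M L Y \<longleftrightarrow> X \<subseteq> Y"
proof
  assume sub: "quot_sub M L X \<subseteq> quot_sub M L Y"
  show "X \<subseteq> Y"
  proof
    fix g assume "g \<in> X"
    then obtain y where y: "y \<in> Y" "coset M g L = coset M y L"
      using sub unfolding quot_sub_def by blast
    then have "g \<in> coset M y L"
      using coset_self \<open>g \<in> X\<close> assms(1) by blast
    then obtain l where "l \<in> L" "g = add M y l"
      unfolding coset_def by blast
    then show "g \<in> Y"
      using y(1) assms(2,3) unfolding r_submodule_def by blast
  qed
qed (auto simp: quot_sub_def)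

lemma quot_sub_inj:
  assumes "r_submodule M X" "L \<subseteq> X" "r_submodule M Y" "L \<subseteq> Y"
    and "quot_sub M L X = quot_sub M L Y"
  shows "X = Y"
  using assms quot_sub_subset_iff unfolding r_submodule_def by (metis subset_antisym order_refl)

end

section \<open>The quotient by \<open>ann(\<aa>R[x,f])\<close>\<close>

locale ann_quotient = torsion_free_frobenius_module p M
  for p and M :: "('r::comm_ring_1, 'm) skew_mod" +
  fixes a :: "'r set" and L :: "'m set"
  assumes is_ideal_a: "is_ideal a" and L_eq: "L = ann M (ext_ideal a)"
begin

lemma L_eq_graded_ann: "L = graded_ann M (\<lambda>_. a)"
  by (simp add: L_eq ann_ext_ideal is_ideal_zero is_ideal_a)

sublocale frobenius_quotient p M L
  by unfold_locales
    (simp_all add: L_eq_graded_ann r_submodule_graded_ann is_ideal_a frob_graded_ann)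

lemma mem_graded_ann_mod_iff:
  assumes "g \<in> carrier M"
  shows "g \<in> graded_ann_mod M L d \<longleftrightarrow>
    (\<forall>n m. \<forall>r\<in>d n. \<forall>s\<in>a. smult M (s * r ^ p ^ m) ((frob M ^^ (m + n)) g) = zero M)"
  using assms unfolding graded_ann_mod_def L_eq_graded_ann graded_ann_def
  by (auto simp: smult_frob_pow_smult smult_closed frob_pow_closed)

lemma graded_ann_subset_graded_ann_mod:
  assumes "\<And>n m r s. r \<in> e n \<Longrightarrow> s \<in> a \<Longrightarrow> s * r ^ p ^ m \<in> d (m + n)"
  shows "graded_ann M d \<subseteq> graded_ann_mod M L e"
proof
  fix g assume "g \<in> graded_ann M d"
  then show "g \<in> graded_ann_mod M L e"
    using assms mem_graded_ann_mod_iff unfolding graded_ann_def by blast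
qed

lemma graded_ann_eq_graded_ann_mod_colon:
  assumes d: "ideal_chain d" and L_subset: "L \<subseteq> graded_ann M d"
  shows "graded_ann M d = graded_ann_mod M L (\<lambda>n. ideal_colon (d n) a)"
proof
  show "graded_ann M d \<subseteq> graded_ann_mod M L (\<lambda>n. ideal_colon (d n) a)"
  proof (rule graded_ann_subset_graded_ann_mod)
    fix n m r s assume r: "r \<in> ideal_colon (d n) a" and s: "s \<in> a"
    have "r ^ p ^ m \<in> ideal_colon (d n) a"
      using is_ideal_power[OF is_ideal_colon r] d two_le_p unfolding ideal_chain_def by simp
    then have "s * r ^ p ^ m \<in> d n"
      using s unfolding ideal_colon_def by (simp add: mult.commute)
    then show "s * r ^ p ^ m \<in> d (m + n)"
      using ideal_chain_mono[OF d, of n "m + n"] by auto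
  qed
  show "graded_ann_mod M L (\<lambda>n. ideal_colon (d n) a) \<subseteq> graded_ann M d"
  proof
    fix g assume g: "g \<in> graded_ann_mod M L (\<lambda>n. ideal_colon (d n) a)"
    then have g_carrier: "g \<in> carrier M"
      unfolding graded_ann_mod_def by blast
    have "smult M t ((frob M ^^ n) g) = zero M" if t: "t \<in> d n" for t n
    proof (rule smult_eq_zero_of_frob_shift[OF g_carrier, where m = n])
      have "t \<in> d (Suc n)"
        using t d unfolding ideal_chain_def by blast
      then have "t \<in> ideal_colon (d (Suc n)) a"
        using subset_ideal_colon d unfolding ideal_chain_def by blast
      then have "smult M t ((frob M ^^ Suc n) g) \<in> graded_ann M d"
        using g L_subset unfolding graded_ann_mod_def by blast
      then show "smult M t ((frob M ^^ n) (smult M t ((frob M ^^ Suc n) g))) = zero M"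
        using t unfolding graded_ann_def by blast
    qed
    then show "g \<in> graded_ann M d"
      using g_carrier unfolding graded_ann_def by blast
  qed
qed

lemma graded_ann_Int_eq_graded_ann_mod:
  assumes d: "ideal_chain d"
  shows "graded_ann M (\<lambda>n. a \<inter> d n) = graded_ann_mod M L d"
proof
  show "graded_ann M (\<lambda>n. a \<inter> d n) \<subseteq> graded_ann_mod M L d"
  proof (rule graded_ann_subset_graded_ann_mod)
    fix n m r s assume r: "r \<in> d n" and s: "s \<in> a"
    have "r ^ p ^ m \<in> d n"
      using is_ideal_power[of "d n" r "p ^ m"] r d two_le_p unfolding ideal_chain_def by simp
    then have "r ^ p ^ m \<in> d (m + n)"
      using ideal_chain_mono[OF d, of n "m + n"] by auto
    then have "s * r ^ p ^ m \<in> d (m + n)"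
      using d is_ideal_mult_left unfolding ideal_chain_def by blast
    then show "s * r ^ p ^ m \<in> a \<inter> d (m + n)"
      using s is_ideal_a is_ideal_mult_right by blast
  qed
  show "graded_ann_mod M L d \<subseteq> graded_ann M (\<lambda>n. a \<inter> d n)"
  proof
    fix g assume g: "g \<in> graded_ann_mod M L d"
    then have g_carrier: "g \<in> carrier M"
      unfolding graded_ann_mod_def by blast
    have "smult M t ((frob M ^^ n) g) = zero M" if t: "t \<in> a \<inter> d n" for t n
    proof (rule smult_eq_zero_of_frob_shift[OF g_carrier, where m = 0])
      have "t \<in> d (Suc n)"
        using t d unfolding ideal_chain_def by blast
      then have "smult M t ((frob M ^^ Suc n) g) \<in> graded_ann M (\<lambda>_. a)"
        using g L_eq_graded_ann unfolding graded_ann_mod_def by blast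
      then show "smult M t ((frob M ^^ 0) (smult M t ((frob M ^^ Suc n) g))) = zero M"
        using t unfolding graded_ann_def by blast
    qed
    then show "g \<in> graded_ann M (\<lambda>n. a \<inter> d n)"
      using g_carrier unfolding graded_ann_def by blast
  qed
qed

lemma ann_ext_ideal_eq_graded_ann_mod_colon:
  assumes "is_ideal b" "b \<subseteq> a"
  shows "ann M (ext_ideal b) = graded_ann_mod M L (\<lambda>_. ideal_colon b a)"
proof -
  have "L \<subseteq> graded_ann M (\<lambda>_. b)"
    unfolding L_eq_graded_ann using assms(2) by (rule graded_ann_antimono)
  then show ?thesis
    using graded_ann_eq_graded_ann_mod_colon[OF ideal_chain_const[OF assms(1)]]
    by (simp add: ann_ext_ideal is_ideal_zero assms(1))
qed

lemma quot_sub_ann_ext_ideal: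
  assumes "is_ideal b" "b \<subseteq> a"
  shows "quot_sub M L (ann M (ext_ideal b)) = ann (quot_mod M L) (ext_ideal (ideal_colon b a))"
  unfolding ann_ext_ideal_eq_graded_ann_mod_colon[OF assms]
  using assms by (simp add: ext_ideal_eq_graded_ideal ann_quot_graded_ideal is_ideal_zero is_ideal_colon)

lemma grann_quot_sub_ann_ext_ideal:
  assumes b: "is_ideal b" "b \<subseteq> a" and N: "N = ann M (ext_ideal b)"
    and grann_N: "grann M N = ext_ideal b"
  shows "grann (quot_mod M L) (quot_sub M L N) = ext_ideal (ideal_colon b a)"
proof -
  have N_mod: "N = graded_ann_mod M L (\<lambda>_. ideal_colon b a)"
    using N ann_ext_ideal_eq_graded_ann_mod_colon[OF b] by simp
  then have N_carrier: "N \<subseteq> carrier M"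
    unfolding graded_ann_mod_def by blast
  have kills_N: "(\<forall>g\<in>N. smult M r ((frob M ^^ i) g) = zero M) \<longleftrightarrow> r \<in> b" for r i
    using grann_N grann_eq_ext_ideal_iff_smult[OF N_carrier] by blast
  have "(\<forall>g\<in>N. smult M r ((frob M ^^ i) g) \<in> L) \<longleftrightarrow> r \<in> ideal_colon b a" for r i
  proof
    assume into_L: "\<forall>g\<in>N. smult M r ((frob M ^^ i) g) \<in> L"
    have "r * s \<in> b" if s: "s \<in> a" for s
    proof -
      have "\<forall>g\<in>N. smult M (s * r) ((frob M ^^ i) g) = zero M"
      proof
        fix g assume g: "g \<in> N"
        then have "smult M r ((frob M ^^ i) g) \<in> graded_ann M (\<lambda>_. a)"
          using into_L L_eq_graded_ann by blast
        then have "smult M s ((frob M ^^ 0) (smult M r ((frob M ^^ i) g))) = zero M"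
          using s unfolding graded_ann_def by blast
        then show "smult M (s * r) ((frob M ^^ i) g) = zero M"
          using g N_carrier by (auto simp: smult_smult frob_pow_closed)
      qed
      then show ?thesis
        using kills_N by (simp add: mult.commute)
    qed
    then show "r \<in> ideal_colon b a"
      unfolding ideal_colon_def by blast
  next
    assume "r \<in> ideal_colon b a"
    then show "\<forall>g\<in>N. smult M r ((frob M ^^ i) g) \<in> L"
      using N_mod unfolding graded_ann_mod_def by blast
  qed
  then show ?thesis
    using grann_quot_sub_eq_ext_ideal_iff[OF N_carrier] by blast
qed

lemma ann_ext_ideal_Int_of_quot_sub:
  assumes N: "r_submodule M N" "L \<subseteq> N" and c: "is_ideal c"
    and quot: "quot_sub M L N = ann (quot_mod M L) (ext_ideal c)"
  shows "N = ann M (ext_ideal (a \<inter> c))"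
proof -
  let ?S = "graded_ann M (\<lambda>_. a \<inter> c)"
  have quot_eq: "quot_sub M L N = quot_sub M L ?S"
    using quot graded_ann_Int_eq_graded_ann_mod[OF ideal_chain_const[OF c]]
    by (simp add: ext_ideal_eq_graded_ideal ann_quot_graded_ideal is_ideal_zero c)
  have "r_submodule M ?S"
    using is_ideal_Int[OF is_ideal_a c] by (rule r_submodule_graded_ann)
  moreover have "L \<subseteq> ?S"
    unfolding L_eq_graded_ann by (rule graded_ann_antimono) blast
  ultimately have "N = ?S"
    using quot_sub_inj[OF N _ _ quot_eq] by blast
  then show ?thesis
    using is_ideal_a c by (simp add: ann_ext_ideal is_ideal_zero)
qed

lemma grann_ann_ext_ideal_Int:
  assumes N: "L \<subseteq> N" "N = ann M (ext_ideal (a \<inter> c))" and c: "is_ideal c"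
    and grann_L: "grann M L = ext_ideal a"
    and grann_quot: "grann (quot_mod M L) (quot_sub M L N) = ext_ideal c"
  shows "grann M N = ext_ideal (a \<inter> c)"
proof -
  have N_ann: "N = graded_ann M (\<lambda>_. a \<inter> c)"
    using N(2) is_ideal_a c by (simp add: ann_ext_ideal is_ideal_zero)
  then have N_carrier: "N \<subseteq> carrier M"
    by (simp add: graded_ann_subset_carrier)
  have "(\<forall>g\<in>N. smult M r ((frob M ^^ i) g) = zero M) \<longleftrightarrow> r \<in> a \<inter> c" for r i
  proof
    assume kills: "\<forall>g\<in>N. smult M r ((frob M ^^ i) g) = zero M"
    then have "r \<in> a"
      using grann_L grann_eq_ext_ideal_iff_smult[OF L_subset_carrier] N(1) by blast
    moreover have "\<forall>g\<in>N. smult M r ((frob M ^^ i) g) \<in> L"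
      using kills zero_mem_L by simp
    then have "r \<in> c"
      using grann_quot grann_quot_sub_eq_ext_ideal_iff[OF N_carrier] by blast
    ultimately show "r \<in> a \<inter> c"
      by blast
  next
    assume "r \<in> a \<inter> c"
    then show "\<forall>g\<in>N. smult M r ((frob M ^^ i) g) = zero M"
      using N_ann unfolding graded_ann_def by blast
  qed
  then show ?thesis
    using grann_eq_ext_ideal_iff_smult[OF N_carrier] by blast
qed

lemma bij_betw_quot_sub_special:
  "bij_betw (quot_sub M L) {S. special_ann_submodule M S \<and> L \<subseteq> S}
     {T. special_ann_submodule (quot_mod M L) T}"
proof (rule bij_betw_imageI)
  show "inj_on (quot_sub M L) {S. special_ann_submodule M S \<and> L \<subseteq> S}"
    by (rule inj_onI, rule quot_sub_inj) (auto simp: r_submodule_special_ann_submodule)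
  show "quot_sub M L ` {S. special_ann_submodule M S \<and> L \<subseteq> S} =
      {T. special_ann_submodule (quot_mod M L) T}"
  proof (intro equalityI subsetI)
    fix T assume "T \<in> quot_sub M L ` {S. special_ann_submodule M S \<and> L \<subseteq> S}"
    then obtain d where d: "ideal_chain d" and L_subset: "L \<subseteq> graded_ann M d"
      and T: "T = quot_sub M L (graded_ann M d)"
      by (auto simp: special_ann_submodule_iff_graded_ann)
    then have "T = quot_sub M L (graded_ann_mod M L (\<lambda>n. ideal_colon (d n) a))"
      using graded_ann_eq_graded_ann_mod_colon[OF d L_subset] by simp
    then show "T \<in> {T. special_ann_submodule (quot_mod M L) T}"
      using ideal_chain_colon[OF d] special_ann_submodule_quot_iff by blast
  next
    fix T assume "T \<in> {T. special_ann_submodule (quot_mod M L) T}"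
    then obtain d where d: "ideal_chain d" and T: "T = quot_sub M L (graded_ann_mod M L d)"
      by (auto simp: special_ann_submodule_quot_iff)
    then have "T = quot_sub M L (graded_ann M (\<lambda>n. a \<inter> d n))"
      by (simp add: graded_ann_Int_eq_graded_ann_mod)
    moreover have "special_ann_submodule M (graded_ann M (\<lambda>n. a \<inter> d n))"
      using ideal_chain_Int[OF is_ideal_a d] special_ann_submodule_iff_graded_ann by blast
    moreover have "L \<subseteq> graded_ann M (\<lambda>n. a \<inter> d n)"
      unfolding L_eq_graded_ann by (rule graded_ann_antimono) blast
    ultimately show "T \<in> quot_sub M L ` {S. special_ann_submodule M S \<and> L \<subseteq> S}"
      by blast
  qed
qed

end

theorem proposition3p3:
  fixes p :: nat
    and G :: "('r::comm_ring_1, 'm) skew_mod"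
    and \<aa> :: "'r set"
    and L N :: "'m set"
  assumes "prime p" and "CHAR('r) = p" and "noetherian_ring TYPE('r)"
    and "skew_module p G" and "x_torsion_free G"
    and "is_ideal \<aa>"
    and L_def: "L = ann G (ext_ideal \<aa>)"
    and "r_submodule G N" and "L \<subseteq> N"
  shows
    "(\<forall>\<bb>. is_ideal \<bb> \<and> \<bb> \<subseteq> \<aa> \<and> N = ann G (ext_ideal \<bb>) \<longrightarrow>
        quot_sub G L N = ann (quot_mod G L) (ext_ideal (ideal_colon \<bb> \<aa>)) \<and>
        (grann G N = ext_ideal \<bb> \<longrightarrow>
           grann (quot_mod G L) (quot_sub G L N) = ext_ideal (ideal_colon \<bb> \<aa>)))
     \<and>
     (\<forall>\<cc>. is_ideal \<cc> \<and> quot_sub G L N = ann (quot_mod G L) (ext_ideal \<cc>) \<longrightarrow>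
        N = ann G (ext_ideal (ideal_prod \<aa> \<cc>)) \<and>
        N = ann G (ext_ideal (\<aa> \<inter> \<cc>)) \<and>
        (grann G L = ext_ideal \<aa> \<and> grann (quot_mod G L) (quot_sub G L N) = ext_ideal \<cc> \<longrightarrow>
           grann G N = ext_ideal (\<aa> \<inter> \<cc>)))
     \<and>
     bij_betw (quot_sub G L) {S. special_ann_submodule G S \<and> L \<subseteq> S}
        {T. special_ann_submodule (quot_mod G L) T}
     \<and>
     (\<forall>S1 S2. special_ann_submodule G S1 \<and> L \<subseteq> S1 \<and>
              special_ann_submodule G S2 \<and> L \<subseteq> S2 \<and> S1 \<subseteq> S2 \<longrightarrow>
              quot_sub G L S1 \<subseteq> quot_sub G L S2)"
proof -
  interpret ann_quotient p G \<aa> L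
    using assms prime_ge_2_nat by unfold_locales auto
  show ?thesis
  proof (intro conjI allI impI; (elim conjE)?)
    fix \<bb> assume "is_ideal \<bb>" "\<bb> \<subseteq> \<aa>" "N = ann G (ext_ideal \<bb>)"
    then show "quot_sub G L N = ann (quot_mod G L) (ext_ideal (ideal_colon \<bb> \<aa>))"
      by (simp add: quot_sub_ann_ext_ideal)
  next
    fix \<bb> assume "is_ideal \<bb>" "\<bb> \<subseteq> \<aa>" "N = ann G (ext_ideal \<bb>)"
      and "grann G N = ext_ideal \<bb>"
    then show "grann (quot_mod G L) (quot_sub G L N) = ext_ideal (ideal_colon \<bb> \<aa>)"
      by (rule grann_quot_sub_ann_ext_ideal)
  next
    fix \<cc> assume "is_ideal \<cc>" "quot_sub G L N = ann (quot_mod G L) (ext_ideal \<cc>)"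
    then show "N = ann G (ext_ideal (ideal_prod \<aa> \<cc>))" and "N = ann G (ext_ideal (\<aa> \<inter> \<cc>))"
      using ann_ext_ideal_Int_of_quot_sub[OF assms(8,9)] ann_ext_ideal_prod[OF is_ideal_a]
      by simp_all
  next
    fix \<cc> assume "is_ideal \<cc>" "quot_sub G L N = ann (quot_mod G L) (ext_ideal \<cc>)"
      and "grann G L = ext_ideal \<aa>" "grann (quot_mod G L) (quot_sub G L N) = ext_ideal \<cc>"
    then show "grann G N = ext_ideal (\<aa> \<inter> \<cc>)"
      using grann_ann_ext_ideal_Int[OF assms(9)] ann_ext_ideal_Int_of_quot_sub[OF assms(8,9)]
      by blast
  qed (simp_all add: bij_betw_quot_sub_special quot_sub_mono)
qed

end
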